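(* Let $h=\sum_{(i,k)\in I_h}h_{k,i}m_iy_k$ with $I_h$ a finite set of index pairs and $h_{k,i}\in\mathbb{R}$, and let $\mathcal{E}(h)=\exp\Big(\int_0^T(h(t),dW(t))_Y-\frac12\int_0^T\|h(t)\|_Y^2dt\Big)$. Then: (i) $\mathcal{E}(h)\in L_{2,Q}(\mathbb{W})$ for every sequence $Q$ of positive numbers; (ii) $\mathcal{E}(h)\in(\mathcal{S})_{\rho,\gamma}$ for $0\le\rho<1$ and $\gamma\ge0$; (iii) $\mathcal{E}(h)\in(\mathcal{S})_{1,\gamma}$, $\gamma\ge0$, as long as $\|h\|^2_{L_2((0,T);Y)}$ is sufficiently small.
   Context: $Y$ is a separable Hilbert space with orthonormal basis $\{y_k\}$, $W$ a cylindrical Brownian motion on $Y$ with $w_k=W_{y_k}$ independent standard Wiener processes, $T\in(0,\infty)$, $\{m_i\}$ an orthonormal basis of $L_2((0,T))$ with $m_i\in L_\infty$. $\mathcal{J}$ is the set of multi-indices $\alpha=(\alpha_i^k)_{i,k\ge1}$ of nonnegative integers with finitely many nonzero entries, $\alpha!=\prod\alpha_i^k!$, $\xi_\alpha=(\alpha!)^{-1/2}\prod H_{\alpha_i^k}(\int_0^Tm_idw_k)$ with $H_n$ the Hermite polynomials; $L_2(\mathbb{W})$ is the space of square-integrable $\mathcal{F}^W_T$-measurable random variables, with coefficients $v_\alpha=\mathbb{E}(v\xi_\alpha)$. For a sequence $Q=\{q_k\}$ of positive numbers, $q^\alpha=\prod_{i,k}q_k^{\alpha_i^k}$ and $L_{2,Q}(\mathbb{W})$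 is the space of (formal series) $v=\sum v_\alpha\xi_\alpha$ with $\sum_\alpha q^{2\alpha}v_\alpha^2<\infty$. For $\rho,\gamma\in\mathbb{R}$, $(\mathcal{S})_{\rho,\gamma}$ is the space of $v$ with $\sum_\alpha(\alpha!)^\rho\prod_{i,k}(2ik)^{\gamma\alpha_i^k}v_\alpha^2<\infty$. *)

theory Defs
  imports "HOL-Probability.Probability"
begin

definition supp_mi :: "(nat \<times> nat \<Rightarrow> nat) \<Rightarrow> (nat \<times> nat) set" where
  "supp_mi \<alpha> = {p. \<alpha> p \<noteq> 0}"

definition multi_indices :: "(nat \<times> nat \<Rightarrow> nat) set" where
  "multi_indices = {\<alpha>. finite (supp_mi \<alpha>) \<and> (\<forall>p\<in>supp_mi \<alpha>. 1 \<le> fst p \<and> 1 \<le> snd p)}"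

definition mi_fact :: "(nat \<times> nat \<Rightarrow> nat) \<Rightarrow> real" where
  "mi_fact \<alpha> = (\<Prod>p\<in>supp_mi \<alpha>. fact (\<alpha> p))"

text \<open>Probabilists' Hermite polynomials H_n(x) = (-1)^n e^{x^2/2} d^n/dx^n e^{-x^2/2}.\<close>
fun hermite :: "nat \<Rightarrow> real \<Rightarrow> real" where
  "hermite 0 x = 1"
| "hermite (Suc 0) x = x"
| "hermite (Suc (Suc n)) x = x * hermite (Suc n) x - real (Suc n) * hermite n x"

text \<open>zeta (i,k) stands for the Gaussian variable int_0^T m_i dw_k.\<close>
definition wick_xi :: "(nat \<times> nat \<Rightarrow> 'a \<Rightarrow> real) \<Rightarrow> (nat \<times> nat \<Rightarrow> nat) \<Rightarrow> 'a \<Rightarrow> real" where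
  "wick_xi \<zeta> \<alpha> \<omega> = (\<Prod>p\<in>supp_mi \<alpha>. hermite (\<alpha> p) (\<zeta> p \<omega>)) / sqrt (mi_fact \<alpha>)"

definition chaos_coeff :: "'a measure \<Rightarrow> (nat \<times> nat \<Rightarrow> 'a \<Rightarrow> real) \<Rightarrow> ('a \<Rightarrow> real) \<Rightarrow> (nat \<times> nat \<Rightarrow> nat) \<Rightarrow> real" where
  "chaos_coeff M \<zeta> v \<alpha> = (\<integral>\<omega>. v \<omega> * wick_xi \<zeta> \<alpha> \<omega> \<partial>M)"

text \<open>q^alpha = prod_{i,k} q_k^{alpha_i^k}; pairs are (i,k).\<close>
definition q_pow :: "(nat \<Rightarrow> real) \<Rightarrow> (nat \<times> nat \<Rightarrow> nat) \<Rightarrow> real" where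
  "q_pow Q \<alpha> = (\<Prod>p\<in>supp_mi \<alpha>. Q (snd p) ^ \<alpha> p)"

definition in_L2Q :: "'a measure \<Rightarrow> (nat \<times> nat \<Rightarrow> 'a \<Rightarrow> real) \<Rightarrow> (nat \<Rightarrow> real) \<Rightarrow> ('a \<Rightarrow> real) \<Rightarrow> bool" where
  "in_L2Q M \<zeta> Q v \<longleftrightarrow>
     (\<lambda>\<alpha>. (q_pow Q \<alpha>)\<^sup>2 * (chaos_coeff M \<zeta> v \<alpha>)\<^sup>2) summable_on multi_indices"

definition in_S :: "'a measure \<Rightarrow> (nat \<times> nat \<Rightarrow> 'a \<Rightarrow> real) \<Rightarrow> real \<Rightarrow> real \<Rightarrow> ('a \<Rightarrow> real) \<Rightarrow> bool" where
  "in_S M \<zeta> \<rho> \<gamma> v \<longleftrightarrow>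
     (\<lambda>\<alpha>. mi_fact \<alpha> powr \<rho>
            * (\<Prod>p\<in>supp_mi \<alpha>. (2 * real (fst p) * real (snd p)) powr (\<gamma> * real (\<alpha> p)))
            * (chaos_coeff M \<zeta> v \<alpha>)\<^sup>2) summable_on multi_indices"

text \<open>E(h) for h = sum_{(i,k) in I} h_{k,i} m_i y_k, with hc (i,k) = h_{k,i}:
  int_0^T (h,dW) = sum hc(i,k) zeta(i,k) and int_0^T |h|^2 dt = sum hc(i,k)^2.\<close>
definition stoch_exp :: "(nat \<times> nat \<Rightarrow> 'a \<Rightarrow> real) \<Rightarrow> (nat \<times> nat) set \<Rightarrow> (nat \<times> nat \<Rightarrow> real) \<Rightarrow> 'a \<Rightarrow> real" where
  "stoch_exp \<zeta> I hc \<omega> = exp ((\<Sum>p\<in>I. hc p * \<zeta> p \<omega>) - 1/2 * (\<Sum>p\<in>I. (hc p)\<^sup>2))"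

end

theory Submission
  imports Defs "HOL-Computational_Algebra.Polynomial"
begin

text \<open>
  Write E(h) as the product over p in I of exp(h_p zeta_p - h_p^2/2), where the zeta_p are
  independent standard Gaussians. Since xi_alpha is a product of normalised Hermite polynomials
  of the same variables, independence factorises the chaos coefficient E(E(h) xi_alpha), and each
  factor is the one-dimensional identity E[exp(a X - a^2/2) H_n(X)] = a^n: the exponential tilt
  shifts the Gaussian density by a, and E[H_n(X + a)] = a^n follows from the Hermite recurrence
  and Stein's identity E[X p(X)] = E[p'(X)]. Hence E(h)_alpha = h^alpha / sqrt(alpha!), and each
  weighted norm in the statement is a finite product over p in I of one-dimensional series
  sum_n u_p(n) h_p^(2n) / n!: the exponential series for L_{2,Q}, the series
  sum_n (n!)^(rho - 1) c^n for rho < 1 (ratio test), and for rho = 1 the geometric series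
  sum_n c^n with c = (2ik)^gamma h_p^2, which converges once the norm of h is small.
\<close>

fun hermite_poly :: "nat \<Rightarrow> real poly" where
  "hermite_poly 0 = 1"
| "hermite_poly (Suc 0) = [:0, 1:]"
| "hermite_poly (Suc (Suc n)) = [:0, 1:] * hermite_poly (Suc n) - smult (real (Suc n)) (hermite_poly n)"

lemma poly_hermite_poly: "poly (hermite_poly n) = hermite n"
  by (induction n rule: hermite_poly.induct) auto

lemma pderiv_hermite_poly: "pderiv (hermite_poly (Suc n)) = smult (real (Suc n)) (hermite_poly n)"
proof (induction n rule: hermite_poly.induct)
  case (3 n)
  let ?H = hermite_poly
  have rec: "?H (Suc (Suc n)) = [:0, 1:] * ?H (Suc n) - smult (real (Suc n)) (?H n)"
    by simp
  have "pderiv (?H (Suc (Suc (Suc n))))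
      = ?H (Suc (Suc n)) + smult (real (Suc (Suc n))) ([:0, 1:] * ?H (Suc n) - smult (real (Suc n)) (?H n))"
    using 3 unfolding hermite_poly.simps(3)[of "Suc n"]
    by (simp add: pderiv_mult pderiv_diff pderiv_pCons pderiv_smult smult_diff_right del: hermite_poly.simps)
  also have "\<dots> = smult (1 + real (Suc (Suc n))) (?H (Suc (Suc n)))"
    by (simp only: rec[symmetric] smult_add_left smult_1_left)
  finally show ?case
    by (simp only: of_nat_Suc[of "Suc (Suc n)"])
qed (simp_all add: pderiv_pCons pderiv_mult pderiv_diff numeral_2_eq_2)

lemma borel_measurable_hermite [measurable]: "hermite n \<in> borel_measurable borel"
  unfolding poly_hermite_poly[symmetric]
  by (intro borel_measurable_continuous_onI continuous_on_poly continuous_on_id)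

definition std_normal_expect :: "real poly \<Rightarrow> real" where
  "std_normal_expect p = (\<integral>x. std_normal_density x * poly p x \<partial>lborel)"

lemma integrable_std_normal_poly: "integrable lborel (\<lambda>x. std_normal_density x * poly p x)"
proof -
  have "(\<lambda>x. std_normal_density x * poly p x)
      = (\<lambda>x. \<Sum>i\<le>degree p. coeff p i * (std_normal_density x * x ^ i))"
    by (auto simp: poly_altdef sum_distrib_left algebra_simps)
  then show ?thesis
    by (simp add: Bochner_Integration.integrable_sum integrable_std_normal_moment)
qed

lemma std_normal_expect_add: "std_normal_expect (p + q) = std_normal_expect p + std_normal_expect q"
  by (simp add: std_normal_expect_def distrib_left integrable_std_normal_poly)

lemma std_normal_expect_diff: "std_normal_expect (p - q) = std_normal_expect p - std_normal_expect q"
  by (simp add: std_normal_expect_def right_diff_distrib integrable_std_normal_poly)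

lemma std_normal_expect_smult: "std_normal_expect (smult c p) = c * std_normal_expect p"
  by (simp add: std_normal_expect_def mult.left_commute)

lemma std_normal_expect_sum: "std_normal_expect (\<Sum>i\<in>A. f i) = (\<Sum>i\<in>A. std_normal_expect (f i))"
  by (induction A rule: infinite_finite_induct)
     (simp_all add: std_normal_expect_add, simp_all add: std_normal_expect_def)

lemma std_normal_expect_monom:
  "std_normal_expect (monom c k) = c * (\<integral>x. std_normal_density x * x ^ k \<partial>lborel)"
  by (simp add: std_normal_expect_def poly_monom mult.left_commute)

lemma std_normal_expect_1: "std_normal_expect 1 = 1"
  using integral_std_normal_moment_even[of 0] std_normal_expect_monom[of 1 0]
  by (simp add: monom_0 one_pCons)

lemma std_normal_expect_linear: "std_normal_expect [:a, 1:] = a"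
proof -
  have "[:a, 1:] = monom a 0 + monom 1 1"
    by (simp add: monom_0 monom_Suc)
  then show ?thesis
    using integral_std_normal_moment_even[of 0] integral_std_normal_moment_odd[of 0]
    by (simp add: std_normal_expect_add std_normal_expect_monom)
qed

lemma integral_std_normal_moment_Suc:
  "(\<integral>x. std_normal_density x * x ^ Suc k \<partial>lborel)
     = real k * (\<integral>x. std_normal_density x * x ^ (k - 1) \<partial>lborel)"
proof (cases "even k")
  case True
  then obtain j where "k = 2 * j" by auto
  then show ?thesis
    using integral_std_normal_moment_odd[of j] integral_std_normal_moment_odd[of "j - 1"]
    by (cases j) simp_all
next
  case False
  then obtain j where j: "k = 2 * j + 1" by (metis oddE)
  have "(fact (2 * Suc j) :: real) = real (2 * j + 1) * fact (2 * j) * (2 * (real j + 1))"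
    by (simp add: algebra_simps)
  moreover have "(2::real) ^ Suc j * fact (Suc j) = 2 ^ j * fact j * (2 * (real j + 1))"
    by (simp add: algebra_simps)
  moreover have nz: "2 * (real j + 1) \<noteq> 0"
    by (smt (verit) of_nat_0_le_iff)
  ultimately have "fact (2 * Suc j) / (2 ^ Suc j * fact (Suc j))
      = real k * (fact (2 * j) / (2 ^ j * fact j) :: real)"
    unfolding j by (simp only: mult_divide_mult_cancel_right[OF nz] times_divide_eq_right)
  moreover have "Suc k = 2 * Suc j" and "k - 1 = 2 * j"
    using j by simp_all
  ultimately show ?thesis
    by (simp only: integral_std_normal_moment_even)
qed

lemma std_normal_expect_stein: "std_normal_expect ([:0, 1:] * p) = std_normal_expect (pderiv p)"
proof -
  define c where "c i = coeff p i" for i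
  have p: "p = (\<Sum>i\<le>degree p. monom (c i) i)"
    using poly_as_sum_of_monoms[of p] by (simp add: c_def)
  have "[:0, 1:] * p = (\<Sum>i\<le>degree p. monom (c i) (Suc i))"
    by (subst p) (simp add: sum_distrib_left monom_Suc)
  then have "std_normal_expect ([:0, 1:] * p)
      = (\<Sum>i\<le>degree p. c i * (\<integral>x. std_normal_density x * x ^ Suc i \<partial>lborel))"
    by (simp add: std_normal_expect_sum std_normal_expect_monom)
  also have "\<dots> = (\<Sum>i\<le>degree p. std_normal_expect (monom (real i * c i) (i - 1)))"
    by (simp add: std_normal_expect_monom integral_std_normal_moment_Suc mult_ac del: power_Suc)
  also have "\<dots> = std_normal_expect (pderiv (\<Sum>i\<le>degree p. monom (c i) i))"
    using higher_pderiv_sum[of 1 "\<lambda>i. monom (c i) i" "{..degree p}"]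
    by (simp add: std_normal_expect_sum pderiv_monom)
  finally show ?thesis
    using p by simp
qed

lemma std_normal_expect_hermite_shift:
  "std_normal_expect (pcompose (hermite_poly n) [:a, 1:]) = a ^ n"
proof (induction n rule: hermite_poly.induct)
  case 1
  show ?case by (simp add: pcompose_1 std_normal_expect_1)
next
  case 2
  show ?case by (simp add: pcompose_pCons std_normal_expect_linear)
next
  case (3 n)
  define Q where "Q k = pcompose (hermite_poly k) [:a, 1:]" for k
  \<comment> \<open>Stein's identity turns the Hermite recurrence into E Q(n+2) = a E Q(n+1).\<close>
  have rec: "Q (Suc (Suc n)) = smult a (Q (Suc n)) + [:0, 1:] * Q (Suc n) - smult (real (Suc n)) (Q n)"
    by (simp add: Q_def pcompose_diff pcompose_mult pcompose_smult pcompose_pCons algebra_simps)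
  have deriv: "pderiv (Q (Suc n)) = smult (real (Suc n)) (Q n)"
    by (simp add: Q_def pderiv_pcompose pderiv_hermite_poly pcompose_smult pderiv_pCons)
  have "std_normal_expect (Q (Suc (Suc n))) = a * std_normal_expect (Q (Suc n))"
    unfolding rec std_normal_expect_add std_normal_expect_diff std_normal_expect_smult
      std_normal_expect_stein deriv
    by simp
  then show ?case
    using "3.IH" by (simp add: Q_def del: hermite_poly.simps)
qed

lemma has_bochner_integral_std_normal_tilted_hermite:
  "has_bochner_integral lborel
     (\<lambda>x. std_normal_density x * (exp (a * x - a\<^sup>2 / 2) * hermite n x)) (a ^ n)"
proof -
  have tilt: "std_normal_density x * exp (a * x - a\<^sup>2 / 2) = std_normal_density (x - a)" for x
  proof -
    have "exp (- x\<^sup>2 / 2) * exp (a * x - a\<^sup>2 / 2) = exp (- (x - a)\<^sup>2 / 2)"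
      unfolding mult_exp_exp by (simp add: power2_diff field_simps)
    then show ?thesis
      by (simp add: std_normal_density_def)
  qed
  have "has_bochner_integral lborel (\<lambda>x. std_normal_density x * poly (pcompose (hermite_poly n) [:a, 1:]) x) (a ^ n)"
    using integrable_std_normal_poly std_normal_expect_hermite_shift[of n a]
    by (simp add: has_bochner_integral_iff std_normal_expect_def)
  then have "has_bochner_integral lborel (\<lambda>x. std_normal_density x * hermite n (a + x)) (a ^ n)"
    by (simp add: poly_pcompose poly_hermite_poly add.commute)
  then have "has_bochner_integral lborel (\<lambda>x. std_normal_density (x - a) * hermite n x) (a ^ n)"
    using lborel_has_bochner_integral_real_affine_iff[of 1 "\<lambda>x. std_normal_density (x - a) * hermite n x" "a ^ n" a]
    by simp
  then show ?thesis
    by (simp add: mult.assoc[symmetric] tilt)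
qed

lemma has_bochner_integral_tilted_hermite:
  assumes "distributed M lborel X std_normal_density"
  shows "has_bochner_integral M (\<lambda>\<omega>. exp (a * X \<omega> - a\<^sup>2 / 2) * hermite n (X \<omega>)) (a ^ n)"
proof -
  have [measurable]: "(\<lambda>x. exp (a * x - a\<^sup>2 / 2) * hermite n x) \<in> borel_measurable lborel"
    by measurable
  show ?thesis
    using has_bochner_integral_std_normal_tilted_hermite[of a n]
      distributed_integrable[OF assms] distributed_integral[OF assms]
    by (simp add: has_bochner_integral_iff)
qed

lemma summable_on_multi_indices_prod:
  fixes v :: "nat \<times> nat \<Rightarrow> nat \<Rightarrow> real"
  assumes fin: "finite I" and v0: "\<And>p. v p 0 = 1" and nonneg: "\<And>p n. 0 \<le> v p n"
    and summable: "\<And>p. p \<in> I \<Longrightarrow> summable (v p)"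
    and vanish: "\<And>p n. p \<notin> I \<Longrightarrow> 0 < n \<Longrightarrow> v p n = 0"
  shows "(\<lambda>\<alpha>. \<Prod>p\<in>supp_mi \<alpha>. v p (\<alpha> p)) summable_on multi_indices"
proof -
  define S where "S = {\<alpha> :: nat \<times> nat \<Rightarrow> nat. supp_mi \<alpha> \<subseteq> I}"
  have "Infinite_Set_Sum.abs_summable_on (v p) UNIV" if "p \<in> I" for p
    using summable[OF that] nonneg
    by (simp add: abs_summable_equivalent[symmetric] summable_on_UNIV_nonneg_real_iff)
  then have "Infinite_Set_Sum.abs_summable_on (\<lambda>g. \<Prod>p\<in>I. v p (g p)) (PiE I (\<lambda>_. UNIV))"
    using fin by (intro abs_summable_on_prod_PiE) auto
  then have "(\<lambda>g. \<Prod>p\<in>I. v p (g p)) summable_on PiE I (\<lambda>_. UNIV)"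
    by (simp add: abs_summable_equivalent[symmetric] abs_summable_summable)
  moreover have bij: "bij_betw (\<lambda>\<alpha>. restrict \<alpha> I) S (PiE I (\<lambda>_. UNIV))"
    by (rule bij_betw_byWitness[where f' = "\<lambda>g p. if p \<in> I then g p else 0"])
       (auto simp: S_def supp_mi_def fun_eq_iff PiE_iff extensional_def)
  ultimately have "(\<lambda>\<alpha>. \<Prod>p\<in>I. v p (\<alpha> p)) summable_on S"
    using summable_on_reindex_bij_betw[OF bij, of "\<lambda>g. \<Prod>p\<in>I. v p (g p)"] by simp
  then have "(\<lambda>\<alpha>. \<Prod>p\<in>I. v p (\<alpha> p)) summable_on S \<inter> multi_indices"
    by (rule summable_on_subset_banach) simp
  moreover have "(\<Prod>p\<in>supp_mi \<alpha>. v p (\<alpha> p)) = 0"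
    if \<alpha>: "\<alpha> \<in> multi_indices" and not_S: "\<alpha> \<notin> S" for \<alpha>
  proof -
    obtain p where "p \<in> supp_mi \<alpha>" "p \<notin> I"
      using not_S by (auto simp: S_def)
    then have "v p (\<alpha> p) = 0"
      using vanish by (simp add: supp_mi_def)
    then show ?thesis
      using \<alpha> \<open>p \<in> supp_mi \<alpha>\<close> by (intro prod_zero) (auto simp: multi_indices_def)
  qed
  moreover have "(\<Prod>p\<in>supp_mi \<alpha>. v p (\<alpha> p)) = (\<Prod>p\<in>I. v p (\<alpha> p))" if "\<alpha> \<in> S" for \<alpha>
    using that fin v0 by (intro prod.mono_neutral_left) (auto simp: S_def supp_mi_def)
  ultimately show ?thesis
    using summable_on_cong_neutral[where S = multi_indices and T = "S \<inter> multi_indices"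
        and f = "\<lambda>\<alpha>. \<Prod>p\<in>supp_mi \<alpha>. v p (\<alpha> p)" and g = "\<lambda>\<alpha>. \<Prod>p\<in>I. v p (\<alpha> p)"]
    by auto
qed

lemma summable_fact_powr_power_div_fact:
  fixes c \<rho> :: real
  assumes "\<rho> < 1"
  shows "summable (\<lambda>n. fact n powr \<rho> * c ^ n / fact n)"
proof -
  define f where "f n = fact n powr \<rho> * c ^ n / fact n" for n
  define r where "r n = real (Suc n) powr (\<rho> - 1)" for n
  have step: "f (Suc n) = c * r n * f n" for n
    by (simp add: f_def r_def powr_diff powr_mult del: of_nat_Suc)
  have "(\<lambda>n. real n powr (\<rho> - 1)) \<longlonglongrightarrow> 0"
    using assms by (intro tendsto_neg_powr filterlim_real_sequentially) simp
  then have "(\<lambda>n. \<bar>c\<bar> * r n) \<longlonglongrightarrow> \<bar>c\<bar> * 0"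
    unfolding r_def by (intro tendsto_mult tendsto_const LIMSEQ_Suc)
  then have "eventually (\<lambda>n. \<bar>c\<bar> * r n < 1 / 2) sequentially"
    by (rule order_tendstoD) simp
  then obtain N where N: "\<And>n. n \<ge> N \<Longrightarrow> \<bar>c\<bar> * r n < 1 / 2"
    unfolding eventually_sequentially by blast
  have "summable f"
  proof (rule summable_ratio_test[where c = "1 / 2" and N = N])
    fix n assume "n \<ge> N"
    then have "\<bar>c\<bar> * r n * \<bar>f n\<bar> \<le> 1 / 2 * \<bar>f n\<bar>"
      using N by (intro mult_right_mono) (auto simp: less_imp_le)
    then show "norm (f (Suc n)) \<le> 1 / 2 * norm (f n)"
      by (simp add: step abs_mult r_def)
  qed simp
  then show ?thesis
    by (simp add: f_def[abs_def])
qed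

locale std_gaussian_family = prob_space M for M :: "'a measure" +
  fixes \<zeta> :: "nat \<times> nat \<Rightarrow> 'a \<Rightarrow> real"
  assumes indep_vars_\<zeta>: "indep_vars (\<lambda>_. borel) \<zeta> {p. 1 \<le> fst p \<and> 1 \<le> snd p}"
    and std_normal_\<zeta>: "\<And>p. 1 \<le> fst p \<Longrightarrow> 1 \<le> snd p \<Longrightarrow> distributed M lborel (\<zeta> p) std_normal_density"
begin

lemma chaos_coeff_stoch_exp:
  assumes fin: "finite I" and I: "\<forall>p\<in>I. 1 \<le> fst p \<and> 1 \<le> snd p" and \<alpha>: "\<alpha> \<in> multi_indices"
  shows "chaos_coeff M \<zeta> (stoch_exp \<zeta> I hc) \<alpha>
       = (\<Prod>p\<in>supp_mi \<alpha>. (if p \<in> I then hc p else 0) ^ \<alpha> p) / sqrt (mi_fact \<alpha>)"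
proof -
  define h where "h p = (if p \<in> I then hc p else 0)" for p
  define J where "J = I \<union> supp_mi \<alpha>"
  define f where "f p \<omega> = exp (h p * \<zeta> p \<omega> - (h p)\<^sup>2 / 2) * hermite (\<alpha> p) (\<zeta> p \<omega>)" for p \<omega>
  have finJ: "finite J" and J: "J \<subseteq> {p. 1 \<le> fst p \<and> 1 \<le> snd p}"
    using fin I \<alpha> by (auto simp: J_def multi_indices_def)
  have product: "stoch_exp \<zeta> I hc \<omega> * wick_xi \<zeta> \<alpha> \<omega> = (\<Prod>p\<in>J. f p \<omega>) / sqrt (mi_fact \<alpha>)"
    for \<omega>
  proof -
    have "stoch_exp \<zeta> I hc \<omega> = exp (\<Sum>p\<in>I. hc p * \<zeta> p \<omega> - (hc p)\<^sup>2 / 2)"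
      by (simp add: stoch_exp_def sum_subtractf sum_divide_distrib)
    also have "\<dots> = (\<Prod>p\<in>I. exp (h p * \<zeta> p \<omega> - (h p)\<^sup>2 / 2))"
      using fin by (simp add: exp_sum h_def)
    also have "\<dots> = (\<Prod>p\<in>J. exp (h p * \<zeta> p \<omega> - (h p)\<^sup>2 / 2))"
      using finJ by (intro prod.mono_neutral_left) (auto simp: J_def h_def)
    moreover have "(\<Prod>p\<in>supp_mi \<alpha>. hermite (\<alpha> p) (\<zeta> p \<omega>)) = (\<Prod>p\<in>J. hermite (\<alpha> p) (\<zeta> p \<omega>))"
      using finJ by (intro prod.mono_neutral_left) (auto simp: J_def supp_mi_def)
    ultimately show ?thesis
      by (simp add: wick_xi_def f_def prod.distrib)
  qed
  have indep: "indep_vars (\<lambda>_. borel) f J"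
    unfolding f_def
    by (rule indep_vars_compose2[where X = \<zeta> and M' = "\<lambda>_. borel"])
       (use indep_vars_subset[OF indep_vars_\<zeta> J] in auto)
  have integral: "has_bochner_integral M (f p) (h p ^ \<alpha> p)" if "p \<in> J" for p
    unfolding f_def using J that
    by (intro has_bochner_integral_tilted_hermite std_normal_\<zeta>) auto
  have "(\<integral>\<omega>. (\<Prod>p\<in>J. f p \<omega>) \<partial>M) = (\<Prod>p\<in>J. h p ^ \<alpha> p)"
    using indep_vars_lebesgue_integral[OF finJ indep] integral
    by (simp add: has_bochner_integral_iff)
  also have "\<dots> = (\<Prod>p\<in>supp_mi \<alpha>. h p ^ \<alpha> p)"
    using finJ by (intro prod.mono_neutral_right) (auto simp: J_def supp_mi_def)
  finally show ?thesis
    by (simp add: chaos_coeff_def product h_def)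
qed

lemma chaos_coeff_stoch_exp_squared:
  assumes "finite I" and "\<forall>p\<in>I. 1 \<le> fst p \<and> 1 \<le> snd p" and "\<alpha> \<in> multi_indices"
  shows "(chaos_coeff M \<zeta> (stoch_exp \<zeta> I hc) \<alpha>)\<^sup>2
       = (\<Prod>p\<in>supp_mi \<alpha>. ((if p \<in> I then hc p else 0)\<^sup>2) ^ \<alpha> p / fact (\<alpha> p))"
proof -
  have "0 < mi_fact \<alpha>"
    by (simp add: mi_fact_def prod_pos)
  then show ?thesis
    by (simp add: chaos_coeff_stoch_exp[OF assms] power_divide mi_fact_def prod_dividef
        prod_power_distrib power_mult[symmetric] mult.commute)
qed

lemma summable_on_weighted_chaos_stoch_exp:
  fixes u :: "nat \<times> nat \<Rightarrow> nat \<Rightarrow> real"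
  assumes fin: "finite I" and I: "\<forall>p\<in>I. 1 \<le> fst p \<and> 1 \<le> snd p"
    and u0: "\<And>p. u p 0 = 1" and nonneg: "\<And>p n. 0 \<le> u p n"
    and summable: "\<And>p. p \<in> I \<Longrightarrow> summable (\<lambda>n. u p n * ((hc p)\<^sup>2) ^ n / fact n)"
  shows "(\<lambda>\<alpha>. (\<Prod>p\<in>supp_mi \<alpha>. u p (\<alpha> p)) * (chaos_coeff M \<zeta> (stoch_exp \<zeta> I hc) \<alpha>)\<^sup>2)
           summable_on multi_indices"
proof -
  define v where "v p n = u p n * ((if p \<in> I then hc p else 0)\<^sup>2) ^ n / fact n" for p n
  have "(\<lambda>\<alpha>. \<Prod>p\<in>supp_mi \<alpha>. v p (\<alpha> p)) summable_on multi_indices"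
    using summable by (intro summable_on_multi_indices_prod[OF fin]) (auto simp: v_def u0 nonneg)
  moreover have "(\<Prod>p\<in>supp_mi \<alpha>. v p (\<alpha> p))
      = (\<Prod>p\<in>supp_mi \<alpha>. u p (\<alpha> p)) * (chaos_coeff M \<zeta> (stoch_exp \<zeta> I hc) \<alpha>)\<^sup>2"
    if "\<alpha> \<in> multi_indices" for \<alpha>
    by (simp add: chaos_coeff_stoch_exp_squared[OF fin I that] v_def prod.distrib[symmetric])
  ultimately show ?thesis
    by (rule summable_on_cong[THEN iffD1, rotated])
qed

lemma in_L2Q_stoch_exp:
  assumes "finite I" and "\<forall>p\<in>I. 1 \<le> fst p \<and> 1 \<le> snd p"
  shows "in_L2Q M \<zeta> Q (stoch_exp \<zeta> I hc)"
proof -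
  have "(\<lambda>\<alpha>. (\<Prod>p\<in>supp_mi \<alpha>. ((Q (snd p))\<^sup>2) ^ \<alpha> p) * (chaos_coeff M \<zeta> (stoch_exp \<zeta> I hc) \<alpha>)\<^sup>2)
      summable_on multi_indices"
    using summable_exp[of "(Q (snd p))\<^sup>2 * (hc p)\<^sup>2" for p]
    by (intro summable_on_weighted_chaos_stoch_exp[OF assms]) (auto simp: power_mult_distrib field_simps)
  moreover have "(\<Prod>p\<in>supp_mi \<alpha>. ((Q (snd p))\<^sup>2) ^ \<alpha> p) = (q_pow Q \<alpha>)\<^sup>2" for \<alpha>
    by (simp add: q_pow_def prod_power_distrib power_mult[symmetric] mult.commute)
  ultimately show ?thesis
    by (simp add: in_L2Q_def)
qed

lemma in_S_stoch_exp_if_summable: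
  assumes fin: "finite I" and I: "\<forall>p\<in>I. 1 \<le> fst p \<and> 1 \<le> snd p"
    and summable: "\<And>p. p \<in> I \<Longrightarrow>
      summable (\<lambda>n. fact n powr \<rho> * ((2 * real (fst p) * real (snd p)) powr \<gamma> * (hc p)\<^sup>2) ^ n / fact n)"
  shows "in_S M \<zeta> \<rho> \<gamma> (stoch_exp \<zeta> I hc)"
proof -
  define u where "u p n = fact n powr \<rho> * ((2 * real (fst p) * real (snd p)) powr \<gamma>) ^ n" for p n
  have weight: "(\<Prod>p\<in>supp_mi \<alpha>. u p (\<alpha> p))
      = mi_fact \<alpha> powr \<rho> * (\<Prod>p\<in>supp_mi \<alpha>. (2 * real (fst p) * real (snd p)) powr (\<gamma> * real (\<alpha> p)))"
    if "\<alpha> \<in> multi_indices" for \<alpha>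
  proof -
    have "((2 * real (fst p) * real (snd p)) powr \<gamma>) ^ \<alpha> p
        = (2 * real (fst p) * real (snd p)) powr (\<gamma> * real (\<alpha> p))" if "p \<in> supp_mi \<alpha>" for p
      using \<open>\<alpha> \<in> multi_indices\<close> that by (auto simp: multi_indices_def powr_power mult.commute)
    then show ?thesis
      by (simp add: u_def mi_fact_def prod_powr_distrib prod.distrib cong: prod.cong)
  qed
  have "(\<lambda>\<alpha>. (\<Prod>p\<in>supp_mi \<alpha>. u p (\<alpha> p)) * (chaos_coeff M \<zeta> (stoch_exp \<zeta> I hc) \<alpha>)\<^sup>2)
      summable_on multi_indices"
    using summable
    by (intro summable_on_weighted_chaos_stoch_exp[OF fin I]) (auto simp: u_def power_mult_distrib mult.assoc)
  then show ?thesis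
    unfolding in_S_def by (rule summable_on_cong[THEN iffD1, rotated]) (simp add: weight)
qed

lemma in_S_stoch_exp:
  assumes "finite I" and "\<forall>p\<in>I. 1 \<le> fst p \<and> 1 \<le> snd p" and "\<rho> < 1"
  shows "in_S M \<zeta> \<rho> \<gamma> (stoch_exp \<zeta> I hc)"
  using assms by (intro in_S_stoch_exp_if_summable summable_fact_powr_power_div_fact)

lemma in_S_one_stoch_exp:
  assumes "finite I" and "\<forall>p\<in>I. 1 \<le> fst p \<and> 1 \<le> snd p"
    and "\<And>p. p \<in> I \<Longrightarrow> (2 * real (fst p) * real (snd p)) powr \<gamma> * (hc p)\<^sup>2 < 1"
  shows "in_S M \<zeta> 1 \<gamma> (stoch_exp \<zeta> I hc)"
  using assms by (intro in_S_stoch_exp_if_summable) (simp_all add: summable_geometric)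

lemma in_S_one_stoch_exp_small:
  assumes fin: "finite I" and I: "\<forall>p\<in>I. 1 \<le> fst p \<and> 1 \<le> snd p"
  shows "\<exists>\<epsilon>>0. \<forall>g. (\<Sum>p\<in>I. (g p)\<^sup>2) < \<epsilon> \<longrightarrow> in_S M \<zeta> 1 \<gamma> (stoch_exp \<zeta> I g)"
proof -
  define w where "w p = (2 * real (fst p) * real (snd p)) powr \<gamma>" for p
  define W where "W = (\<Sum>p\<in>I. w p) + 1"
  have w_nonneg: "0 \<le> w p" for p
    by (simp add: w_def)
  then have "W > 0"
    by (simp add: W_def sum_nonneg add_nonneg_pos)
  have w_le: "w p \<le> W" if "p \<in> I" for p
    using member_le_sum[OF that, of w] fin w_nonneg by (simp add: W_def)
  have "in_S M \<zeta> 1 \<gamma> (stoch_exp \<zeta> I g)" if small: "(\<Sum>p\<in>I. (g p)\<^sup>2) < 1 / W" for g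
  proof (rule in_S_one_stoch_exp[OF fin I])
    fix p assume p: "p \<in> I"
    have "(g p)\<^sup>2 < 1 / W"
      using member_le_sum[OF p, of "\<lambda>p. (g p)\<^sup>2"] fin small by simp
    have "w p * (g p)\<^sup>2 \<le> W * (g p)\<^sup>2"
      using w_le[OF p] by (intro mult_right_mono) auto
    also have "\<dots> < W * (1 / W)"
      using \<open>(g p)\<^sup>2 < 1 / W\<close> \<open>W > 0\<close> by (intro mult_strict_left_mono)
    finally show "(2 * real (fst p) * real (snd p)) powr \<gamma> * (g p)\<^sup>2 < 1"
      using \<open>W > 0\<close> by (simp add: w_def)
  qed
  then show ?thesis
    using \<open>W > 0\<close> by (intro exI[of _ "1 / W"]) auto
qed

end

theorem lemma7p7:
  fixes M :: "'a measure" and \<zeta> :: "nat \<times> nat \<Rightarrow> 'a \<Rightarrow> real"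
    and I :: "(nat \<times> nat) set" and hc :: "nat \<times> nat \<Rightarrow> real"
  assumes "prob_space M"
    and "prob_space.indep_vars M (\<lambda>_. borel) \<zeta> {p. 1 \<le> fst p \<and> 1 \<le> snd p}"
    and "\<And>p. 1 \<le> fst p \<Longrightarrow> 1 \<le> snd p \<Longrightarrow> distributed M lborel (\<zeta> p) std_normal_density"
    and "finite I" and "\<forall>p\<in>I. 1 \<le> fst p \<and> 1 \<le> snd p"
  shows "(\<forall>Q. (\<forall>k\<ge>1. Q k > 0) \<longrightarrow> in_L2Q M \<zeta> Q (stoch_exp \<zeta> I hc))
       \<and> (\<forall>\<rho> \<gamma>. 0 \<le> \<rho> \<and> \<rho> < 1 \<and> 0 \<le> \<gamma> \<longrightarrow> in_S M \<zeta> \<rho> \<gamma> (stoch_exp \<zeta> I hc))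
       \<and> (\<forall>\<gamma>\<ge>0. \<exists>\<epsilon>>0. \<forall>g :: nat \<times> nat \<Rightarrow> real.
            (\<Sum>p\<in>I. (g p)\<^sup>2) < \<epsilon> \<longrightarrow> in_S M \<zeta> 1 \<gamma> (stoch_exp \<zeta> I g))"
proof -
  interpret std_gaussian_family M \<zeta>
    using assms(1-3) by (simp add: std_gaussian_family_def std_gaussian_family_axioms_def)
  show ?thesis
    using assms(4,5) by (simp add: in_L2Q_stoch_exp in_S_stoch_exp in_S_one_stoch_exp_small)
qed

end
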